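(* For $i=1,2$ let $A_i\in M_{g_i,n_i}(\mathbb{Z})$ be a simple totally unimodular matrix and let $Q_i$ be a positive definite quadratic form of rank $g_i$ (a symmetric $g_i\times g_i$ real matrix) which is well-suited for $A_i$. Then $$Q=\begin{pmatrix}Q_1&0\\0&Q_2\end{pmatrix}\ \text{ is well-suited for }\ A=\begin{pmatrix}A_1&0\\0&A_2\end{pmatrix}.$$
   Context: A real matrix is totally unimodular if every square submatrix has determinant $-1,0$ or $1$; it is simple if it has no zero column and no two proportional columns. For a simple totally unimodular $A\in M_{g,n}(\mathbb{Z})$, a symmetric matrix $Q\in M_{g,g}(\mathbb{R})$ is well-suited for $A$ if $Q$ is positive definite and for every $\xi\in\mathbb{Z}^g\setminus\{0\}$ one has $Q(\xi)=\xi^tQ\xi\ge1$, with equality if and only if $\xi$ or $-\xi$ is a column vector of $A$. *)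

theory Defs
  imports Jordan_Normal_Form.Determinant Jordan_Normal_Form.DL_Submatrix
begin

definition totally_unimodular :: "int mat \<Rightarrow> bool" where
  "totally_unimodular A \<longleftrightarrow>
     (\<forall>I J. I \<subseteq> {..<dim_row A} \<longrightarrow> J \<subseteq> {..<dim_col A} \<longrightarrow> card I = card J \<longrightarrow>
        det (submatrix A I J) \<in> {-1, 0, 1})"

definition simple_mat :: "int mat \<Rightarrow> bool" where
  "simple_mat A \<longleftrightarrow>
     (\<forall>j<dim_col A. col A j \<noteq> 0\<^sub>v (dim_row A)) \<and>
     (\<forall>j<dim_col A. \<forall>k<dim_col A. j \<noteq> k \<longrightarrow>
        \<not> (\<exists>c::real. map_vec real_of_int (col A j) = c \<cdot>\<^sub>v map_vec real_of_int (col A k)))"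

definition pos_def_mat :: "real mat \<Rightarrow> bool" where
  "pos_def_mat Q \<longleftrightarrow>
     (\<forall>x \<in> carrier_vec (dim_row Q). x \<noteq> 0\<^sub>v (dim_row Q) \<longrightarrow> x \<bullet> (Q *\<^sub>v x) > 0)"

definition well_suited :: "real mat \<Rightarrow> int mat \<Rightarrow> bool" where
  "well_suited Q A \<longleftrightarrow>
     Q \<in> carrier_mat (dim_row A) (dim_row A) \<and> Q\<^sup>T = Q \<and> pos_def_mat Q \<and>
     (\<forall>\<xi> \<in> carrier_vec (dim_row A). \<xi> \<noteq> 0\<^sub>v (dim_row A) \<longrightarrow>
        (let q = map_vec real_of_int \<xi> \<bullet> (Q *\<^sub>v map_vec real_of_int \<xi>) in
          q \<ge> 1 \<and> (q = 1 \<longleftrightarrow> (\<exists>j<dim_col A. col A j = \<xi> \<or> col A j = - \<xi>))))"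

end

theory Submission
  imports Defs
begin

text \<open>For \<open>\<xi> = (\<xi>\<^sub>1, \<xi>\<^sub>2)\<close> the block-diagonal form splits as \<open>Q(\<xi>) = Q\<^sub>1(\<xi>\<^sub>1) + Q\<^sub>2(\<xi>\<^sub>2)\<close>,
  a sum of two non-negative terms, each \<open>\<ge> 1\<close> when its argument is a non-zero integer vector.
  Hence \<open>Q(\<xi>) \<ge> 1\<close>, and \<open>Q(\<xi>) = 1\<close> forces one component to vanish and the other to attain the
  value 1, i.e. to be \<open>\<plusminus>\<close> a column of \<open>A\<^sub>1\<close> resp. \<open>A\<^sub>2\<close>; these are exactly the columns of the
  block-diagonal \<open>A\<close>, padded with zeros.\<close>

definition quad_form :: "'a :: comm_ring mat \<Rightarrow> 'a vec \<Rightarrow> 'a" where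
  "quad_form Q x = x \<bullet> (Q *\<^sub>v x)"

definition pm_column :: "int mat \<Rightarrow> int vec \<Rightarrow> bool" where
  "pm_column A \<xi> \<longleftrightarrow> (\<exists>j<dim_col A. col A j = \<xi> \<or> col A j = - \<xi>)"

lemma well_suited_iff:
  "well_suited Q A \<longleftrightarrow>
     Q \<in> carrier_mat (dim_row A) (dim_row A) \<and> Q\<^sup>T = Q \<and> pos_def_mat Q \<and>
     (\<forall>\<xi> \<in> carrier_vec (dim_row A). \<xi> \<noteq> 0\<^sub>v (dim_row A) \<longrightarrow>
        quad_form Q (map_vec of_int \<xi>) \<ge> 1 \<and>
        (quad_form Q (map_vec of_int \<xi>) = 1 \<longleftrightarrow> pm_column A \<xi>))"
  by (simp add: well_suited_def quad_form_def pm_column_def Let_def)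

lemma uminus_append_vec: "- (v @\<^sub>v w) = (- v) @\<^sub>v (- w)"
  by (rule eq_vecI) auto

lemma map_vec_append_vec: "map_vec f (v @\<^sub>v w) = map_vec f v @\<^sub>v map_vec f w"
  by (rule eq_vecI) auto

lemma append_vec_eq_zero_iff:
  assumes "v \<in> carrier_vec n" "w \<in> carrier_vec m"
  shows "v @\<^sub>v w = 0\<^sub>v (n + m) \<longleftrightarrow> v = 0\<^sub>v n \<and> w = 0\<^sub>v m"
proof -
  have "0\<^sub>v (n + m) = (0\<^sub>v n :: 'a vec) @\<^sub>v 0\<^sub>v m"
    by (rule eq_vecI) auto
  then show ?thesis
    using assms by simp
qed

lemma carrier_vec_add_cases:
  assumes "x \<in> carrier_vec (n + m)"
  obtains v w where "x = v @\<^sub>v w" "v \<in> carrier_vec n" "w \<in> carrier_vec m"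
  using vec_first_last_append[OF assms] by (metis vec_first_carrier vec_last_carrier)

lemma quad_form_four_block_diag:
  assumes "Q1 \<in> carrier_mat n n" "Q2 \<in> carrier_mat m m"
    and "v \<in> carrier_vec n" "w \<in> carrier_vec m"
  shows "quad_form (four_block_mat Q1 (0\<^sub>m n m) (0\<^sub>m m n) Q2) (v @\<^sub>v w)
         = quad_form Q1 v + quad_form Q2 w"
proof -
  have "four_block_mat Q1 (0\<^sub>m n m) (0\<^sub>m m n) Q2 *\<^sub>v (v @\<^sub>v w)
      = (Q1 *\<^sub>v v + 0\<^sub>m n m *\<^sub>v w) @\<^sub>v (0\<^sub>m m n *\<^sub>v v + Q2 *\<^sub>v w)"
    by (rule four_block_mat_mult_vec) (use assms in auto)
  also have "\<dots> = (Q1 *\<^sub>v v) @\<^sub>v (Q2 *\<^sub>v w)"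
    using assms by auto
  finally show ?thesis
    using assms by (simp add: quad_form_def scalar_prod_append[of _ n _ m])
qed

lemma pos_def_mat_quad_form_nonneg:
  assumes "pos_def_mat Q" "Q \<in> carrier_mat n n" "x \<in> carrier_vec n"
  shows "quad_form Q x \<ge> 0"
  using assms by (cases "x = 0\<^sub>v n") (auto simp: pos_def_mat_def quad_form_def less_imp_le)

lemma pos_def_mat_four_block_diag:
  assumes "pos_def_mat Q1" "pos_def_mat Q2"
    and "Q1 \<in> carrier_mat n n" "Q2 \<in> carrier_mat m m"
  shows "pos_def_mat (four_block_mat Q1 (0\<^sub>m n m) (0\<^sub>m m n) Q2)"
  unfolding pos_def_mat_def
proof (intro ballI impI)
  let ?Q = "four_block_mat Q1 (0\<^sub>m n m) (0\<^sub>m m n) Q2"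
  fix x :: "real vec"
  assume "x \<in> carrier_vec (dim_row ?Q)" and nonzero: "x \<noteq> 0\<^sub>v (dim_row ?Q)"
  then have "x \<in> carrier_vec (n + m)"
    using assms by simp
  then obtain v w where x: "x = v @\<^sub>v w" and v: "v \<in> carrier_vec n" and w: "w \<in> carrier_vec m"
    by (rule carrier_vec_add_cases)
  have "v \<noteq> 0\<^sub>v n \<or> w \<noteq> 0\<^sub>v m"
    using nonzero assms append_vec_eq_zero_iff[OF v w] by (auto simp: x)
  then have "quad_form Q1 v > 0 \<or> quad_form Q2 w > 0"
    using assms v w by (auto simp: pos_def_mat_def quad_form_def)
  moreover have "quad_form Q1 v \<ge> 0" "quad_form Q2 w \<ge> 0"
    using assms v w pos_def_mat_quad_form_nonneg by blast+
  moreover have "quad_form ?Q x = quad_form Q1 v + quad_form Q2 w"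
    unfolding x using assms(3,4) v w by (rule quad_form_four_block_diag)
  ultimately have "quad_form ?Q x > 0"
    by linarith
  then show "x \<bullet> (?Q *\<^sub>v x) > 0"
    by (simp add: quad_form_def)
qed

lemma pm_column_four_block_diag:
  assumes A1: "A1 \<in> carrier_mat g1 n1" and A2: "A2 \<in> carrier_mat g2 n2"
    and v: "v \<in> carrier_vec g1" and w: "w \<in> carrier_vec g2"
  shows "pm_column (four_block_mat A1 (0\<^sub>m g1 n2) (0\<^sub>m g2 n1) A2) (v @\<^sub>v w) \<longleftrightarrow>
           (w = 0\<^sub>v g2 \<and> pm_column A1 v) \<or> (v = 0\<^sub>v g1 \<and> pm_column A2 w)"
proof -
  let ?A = "four_block_mat A1 (0\<^sub>m g1 n2) (0\<^sub>m g2 n1) A2"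
  have col_left: "col ?A j = col A1 j @\<^sub>v 0\<^sub>v g2" if "j < n1" for j
    using col_four_block_mat(1)[OF A1 zero_carrier_mat zero_carrier_mat A2] that by auto
  have col_right: "col ?A (n1 + j) = 0\<^sub>v g1 @\<^sub>v col A2 j" if "j < n2" for j
    using col_four_block_mat(2)[OF A1 zero_carrier_mat zero_carrier_mat A2, of "n1 + j"] that by auto
  have pm_left: "col ?A j = v @\<^sub>v w \<or> col ?A j = - (v @\<^sub>v w) \<longleftrightarrow>
      w = 0\<^sub>v g2 \<and> (col A1 j = v \<or> col A1 j = - v)" if "j < n1" for j
    using that A1 v w
    by (auto simp: col_left uminus_append_vec append_vec_eq[of "col A1 j" g1]
        eq_commute[of "0\<^sub>v g2"] uminus_zero_vec_eq)
  have pm_right: "col ?A (n1 + j) = v @\<^sub>v w \<or> col ?A (n1 + j) = - (v @\<^sub>v w) \<longleftrightarrow>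
      v = 0\<^sub>v g1 \<and> (col A2 j = w \<or> col A2 j = - w)" if "j < n2" for j
    using that A2 v w
    by (auto simp: col_right uminus_append_vec append_vec_eq[of "0\<^sub>v g1" g1]
        eq_commute[of "0\<^sub>v g1"] uminus_zero_vec_eq)
  have "(\<exists>j<n1 + n2. P j) \<longleftrightarrow> (\<exists>j<n1. P j) \<or> (\<exists>j<n2. P (n1 + j))" for P
    by (metis add_diff_inverse_nat nat_add_left_cancel_less trans_less_add1)
  then have "pm_column ?A (v @\<^sub>v w) \<longleftrightarrow>
      (\<exists>j<n1. col ?A j = v @\<^sub>v w \<or> col ?A j = - (v @\<^sub>v w)) \<or>
      (\<exists>j<n2. col ?A (n1 + j) = v @\<^sub>v w \<or> col ?A (n1 + j) = - (v @\<^sub>v w))"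
    using A1 A2 unfolding pm_column_def by simp
  also have "\<dots> \<longleftrightarrow> (\<exists>j<n1. w = 0\<^sub>v g2 \<and> (col A1 j = v \<or> col A1 j = - v)) \<or>
      (\<exists>j<n2. v = 0\<^sub>v g1 \<and> (col A2 j = w \<or> col A2 j = - w))"
    using pm_left pm_right by blast
  finally show ?thesis
    using A1 A2 unfolding pm_column_def by auto
qed

lemma well_suited_four_block_diag:
  assumes A1: "A1 \<in> carrier_mat g1 n1" and A2: "A2 \<in> carrier_mat g2 n2"
    and Q1: "well_suited Q1 A1" and Q2: "well_suited Q2 A2"
  shows "well_suited (four_block_mat Q1 (0\<^sub>m g1 g2) (0\<^sub>m g2 g1) Q2)
                     (four_block_mat A1 (0\<^sub>m g1 n2) (0\<^sub>m g2 n1) A2)"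
proof -
  let ?Q = "four_block_mat Q1 (0\<^sub>m g1 g2) (0\<^sub>m g2 g1) Q2"
  let ?A = "four_block_mat A1 (0\<^sub>m g1 n2) (0\<^sub>m g2 n1) A2"
  have Q1_props: "Q1 \<in> carrier_mat g1 g1" "Q1\<^sup>T = Q1" "pos_def_mat Q1"
    and Q2_props: "Q2 \<in> carrier_mat g2 g2" "Q2\<^sup>T = Q2" "pos_def_mat Q2"
    using Q1 Q2 A1 A2 by (auto simp: well_suited_iff)
  have "?Q\<^sup>T = ?Q"
    using Q1_props Q2_props by (simp add: transpose_four_block_mat[of _ g1 g1 _ g2 _ g2])
  moreover have "pos_def_mat ?Q"
    using pos_def_mat_four_block_diag Q1_props Q2_props by blast
  moreover have "quad_form ?Q (map_vec of_int \<xi>) \<ge> 1 \<and>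
      (quad_form ?Q (map_vec of_int \<xi>) = 1 \<longleftrightarrow> pm_column ?A \<xi>)"
    if \<xi>_carrier: "\<xi> \<in> carrier_vec (g1 + g2)" and \<xi>_nonzero: "\<xi> \<noteq> 0\<^sub>v (g1 + g2)" for \<xi>
  proof -
    obtain v w where \<xi>: "\<xi> = v @\<^sub>v w" and v: "v \<in> carrier_vec g1" and w: "w \<in> carrier_vec g2"
      using carrier_vec_add_cases[OF \<xi>_carrier] .
    define q1 where "q1 = quad_form Q1 (map_vec of_int v)"
    define q2 where "q2 = quad_form Q2 (map_vec of_int w)"
    have "quad_form ?Q (map_vec of_int \<xi>) = q1 + q2"
      using Q1_props Q2_props v w
      by (simp add: \<xi> map_vec_append_vec quad_form_four_block_diag q1_def q2_def)
    moreover have "q1 \<ge> 0" "q2 \<ge> 0"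
      using Q1_props Q2_props v w pos_def_mat_quad_form_nonneg by (auto simp: q1_def q2_def)
    moreover have "v = 0\<^sub>v g1 \<Longrightarrow> q1 = 0" "w = 0\<^sub>v g2 \<Longrightarrow> q2 = 0"
      using Q1_props Q2_props by (simp_all add: q1_def q2_def quad_form_def of_int_hom.vec_hom_zero)
    moreover have "v \<noteq> 0\<^sub>v g1 \<Longrightarrow> q1 \<ge> 1 \<and> (q1 = 1 \<longleftrightarrow> pm_column A1 v)"
      using Q1 A1 v by (auto simp: well_suited_iff q1_def)
    moreover have "w \<noteq> 0\<^sub>v g2 \<Longrightarrow> q2 \<ge> 1 \<and> (q2 = 1 \<longleftrightarrow> pm_column A2 w)"
      using Q2 A2 w by (auto simp: well_suited_iff q2_def)
    moreover have "v \<noteq> 0\<^sub>v g1 \<or> w \<noteq> 0\<^sub>v g2"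
      using \<xi>_nonzero append_vec_eq_zero_iff[OF v w] by (auto simp: \<xi>)
    ultimately show ?thesis
      using pm_column_four_block_diag[OF A1 A2 v w] by (auto simp: \<xi>)
  qed
  ultimately show ?thesis
    using Q1_props Q2_props A1 A2 by (auto simp: well_suited_iff)
qed

theorem lemma4p2p3:
  fixes A1 A2 :: "int mat" and Q1 Q2 :: "real mat" and g1 g2 n1 n2 :: nat
  assumes "A1 \<in> carrier_mat g1 n1" and "A2 \<in> carrier_mat g2 n2"
    and "simple_mat A1" and "simple_mat A2"
    and "totally_unimodular A1" and "totally_unimodular A2"
    and "Q1 \<in> carrier_mat g1 g1" and "Q2 \<in> carrier_mat g2 g2"
    and "Q1\<^sup>T = Q1" and "Q2\<^sup>T = Q2"
    and "pos_def_mat Q1" and "pos_def_mat Q2"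
    and "well_suited Q1 A1" and "well_suited Q2 A2"
  shows "well_suited (four_block_mat Q1 (0\<^sub>m g1 g2) (0\<^sub>m g2 g1) Q2)
                     (four_block_mat A1 (0\<^sub>m g1 n2) (0\<^sub>m g2 n1) A2)"
  using well_suited_four_block_diag assms(1,2,13,14) .

end
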